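(* Let $n\ge4$, $p$ a prime with $p\ge\max\{n-2,3\}$, and $1\le j\le n-3$. For $t=(t_1,\dots,t_n)\in\{0,\dots,p-1\}^n$ set $d_t=\sum_it_i$, let $q^0_{jt}=(j+d_t)/p$ if $j+d_t\equiv0\pmod p$ (undefined otherwise), and $q^1_{jt}=(j+d_t-p+2)/p$ if $j+d_t-p+2\equiv0\pmod p$ (undefined otherwise). Then $q^0_{jt}$ and $q^1_{jt}$ are never both defined. Moreover, whenever defined, $q^0_{jt}\in[1,n-1]$ if $(j,p)\neq(1,n-2)$ and $q^0_{jt}\in[1,n-2]$ if $(j,p)=(1,n-2)$; and $q^1_{jt}\in[0,n-2]$ if $(j,p)\ne(n-3,n-2)$ and $q^1_{jt}\in[1,n-2]$ if $(j,p)=(n-3,n-2)$. All integer values in these intervals occur as $t$ varies.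
   Context: Intervals $[a,b]$ denote sets of integers. *)

theory Defs
  imports "HOL-Computational_Algebra.Primes"
begin

definition tuples :: "nat \<Rightarrow> nat \<Rightarrow> nat list set" where
  "tuples n p = {t. length t = n \<and> (\<forall>x\<in>set t. x < p)}"

definition dsum :: "nat list \<Rightarrow> int" where
  "dsum t = int (sum_list t)"

definition q0 :: "nat \<Rightarrow> nat \<Rightarrow> nat list \<Rightarrow> int option" where
  "q0 p j t = (let s = int j + dsum t in
      if int p dvd s then Some (s div int p) else None)"

definition q1 :: "nat \<Rightarrow> nat \<Rightarrow> nat list \<Rightarrow> int option" where
  "q1 p j t = (let s = int j + dsum t - int p + 2 in
      if int p dvd s then Some (s div int p) else None)"

end

theory Submission
  imports Defs
begin

(* As t ranges over {0,...,p-1}^n, d_t takes exactly the values 0,...,n(p-1). Hence q^0 takes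
   exactly the integer values v with j \<le> pv \<le> n(p-1) + j, and q^1 those with
   j + 2 - p \<le> pv \<le> n(p-1) + j + 2 - p; bounding these multiples of p by the hypotheses on
   n, p, j gives the intervals. Both being defined would force p to divide 2. *)

lemma sum_list_tuples_le: "t \<in> tuples n p \<Longrightarrow> sum_list t \<le> n * (p - 1)"
proof (induction t arbitrary: n)
  case Nil
  then show ?case by simp
next
  case (Cons a t)
  then obtain m where "n = Suc m" "t \<in> tuples m p" "a < p"
    by (auto simp: tuples_def)
  with Cons.IH show ?case by fastforce
qed

lemma tuple_with_sum_exists:
  assumes "0 < p" "d \<le> n * (p - 1)"
  shows "\<exists>t\<in>tuples n p. sum_list t = d"
  using assms(2)
proof (induction n arbitrary: d)
  case 0
  then show ?case by (auto simp: tuples_def)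
next
  case (Suc m)
  define a where "a = min d (p - 1)"
  have "d - a \<le> m * (p - 1)"
    using Suc.prems by (auto simp: a_def)
  with Suc.IH obtain t where "t \<in> tuples m p" "sum_list t = d - a"
    by blast
  then have "a # t \<in> tuples (Suc m) p" "sum_list (a # t) = d"
    using assms(1) by (auto simp: tuples_def a_def)
  then show ?case by blast
qed

lemma dsum_image_tuples:
  assumes "0 < p"
  shows "dsum ` tuples n p = {0 .. int n * (int p - 1)}"
proof -
  have bound: "int (n * (p - 1)) = int n * (int p - 1)"
    using assms by (simp add: of_nat_diff)
  show ?thesis
  proof (intro equalityI subsetI)
    fix D assume "D \<in> dsum ` tuples n p"
    then obtain t where "t \<in> tuples n p" "D = dsum t" by blast
    then have "0 \<le> D" "D \<le> int (n * (p - 1))"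
      using sum_list_tuples_le[of t n p] by (simp_all only: dsum_def of_nat_le_iff of_nat_0_le_iff)
    then show "D \<in> {0 .. int n * (int p - 1)}"
      unfolding bound[symmetric] atLeastAtMost_iff ..
  next
    fix D assume "D \<in> {0 .. int n * (int p - 1)}"
    then have "0 \<le> D" "nat D \<le> n * (p - 1)"
      unfolding bound[symmetric] atLeastAtMost_iff nat_le_iff by simp_all
    with tuple_with_sum_exists[OF assms] obtain t where "t \<in> tuples n p" "sum_list t = nat D"
      by blast
    then show "D \<in> dsum ` tuples n p"
      using \<open>0 \<le> D\<close> by (force simp: dsum_def)
  qed
qed

lemma q0_eq_Some_iff: "0 < p \<Longrightarrow> q0 p j t = Some v \<longleftrightarrow> int j + dsum t = int p * v"
  by (auto simp: q0_def Let_def)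

lemma q1_eq_Some_iff: "0 < p \<Longrightarrow> q1 p j t = Some v \<longleftrightarrow> int j + dsum t - int p + 2 = int p * v"
  by (auto simp: q1_def Let_def)

lemma q0_q1_not_both_defined:
  assumes "2 < p"
  shows "q0 p j t = None \<or> q1 p j t = None"
proof (rule ccontr)
  let ?s = "int j + dsum t"
  assume "\<not> ?thesis"
  then have "int p dvd ?s" "int p dvd ?s - int p + 2"
    by (auto simp: q0_def q1_def Let_def split: if_splits)
  then have "int p dvd 2"
    by (metis add_diff_cancel_left' diff_add_cancel dvd_add_right_iff dvd_diff dvd_refl)
  with assms show False
    using zdvd_imp_le by fastforce
qed

lemma q0_values:
  assumes "0 < p"
  shows "{v. \<exists>t\<in>tuples n p. q0 p j t = Some v}
       = {v. int j \<le> int p * v \<and> int p * v \<le> int n * (int p - 1) + int j}"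
proof -
  have "(\<exists>t\<in>tuples n p. q0 p j t = Some v) \<longleftrightarrow> int p * v - int j \<in> dsum ` tuples n p" for v
    unfolding q0_eq_Some_iff[OF assms] image_iff by (metis add_diff_cancel_left' diff_add_cancel)
  then show ?thesis
    unfolding dsum_image_tuples[OF assms] by auto
qed

lemma q1_values:
  assumes "0 < p"
  shows "{v. \<exists>t\<in>tuples n p. q1 p j t = Some v}
       = {v. int j + 2 - int p \<le> int p * v \<and> int p * v \<le> int n * (int p - 1) + int j + 2 - int p}"
proof -
  have "(\<exists>t\<in>tuples n p. q1 p j t = Some v) \<longleftrightarrow> int p * v + int p - int j - 2 \<in> dsum ` tuples n p" for v
    unfolding q1_eq_Some_iff[OF assms] image_iff by (smt (verit))
  then show ?thesis
    unfolding dsum_image_tuples[OF assms] by auto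
qed

lemma multiples_between_eq_interval:
  fixes p a b lo hi :: int
  assumes "0 < p" "p * (lo - 1) < a" "a \<le> p * lo" "p * hi \<le> b" "b < p * (hi + 1)"
  shows "{v. a \<le> p * v \<and> p * v \<le> b} = {lo..hi}"
proof (intro equalityI subsetI)
  fix v assume "v \<in> {v. a \<le> p * v \<and> p * v \<le> b}"
  then have "p * (lo - 1) < p * v" "p * v < p * (hi + 1)"
    using assms(2,5) by auto
  then have "lo - 1 < v" "v < hi + 1"
    using mult_less_cancel_left_pos[OF \<open>0 < p\<close>] by blast+
  then show "v \<in> {lo..hi}"
    by simp
next
  fix v assume "v \<in> {lo..hi}"
  then have "p * lo \<le> p * v" "p * v \<le> p * hi"
    using \<open>0 < p\<close> by simp_all
  then show "v \<in> {v. a \<le> p * v \<and> p * v \<le> b}"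
    using assms(3,4) by auto
qed

theorem lemma6p4:
  fixes n p j :: nat
  assumes "n \<ge> 4" and "prime p" and "p \<ge> max (n - 2) 3"
    and "1 \<le> j" and "j \<le> n - 3"
  defines "I0 \<equiv> (if (j, p) \<noteq> (1, n - 2) then {1 .. int n - 1} else {1 .. int n - 2})"
    and "I1 \<equiv> (if (j, p) \<noteq> (n - 3, n - 2) then {0 .. int n - 2} else {1 .. int n - 2})"
  shows "(\<forall>t\<in>tuples n p. \<not> (q0 p j t \<noteq> None \<and> q1 p j t \<noteq> None))
       \<and> (\<forall>t\<in>tuples n p. \<forall>v. q0 p j t = Some v \<longrightarrow> v \<in> I0)
       \<and> (\<forall>t\<in>tuples n p. \<forall>v. q1 p j t = Some v \<longrightarrow> v \<in> I1)
       \<and> (\<forall>v\<in>I0. \<exists>t\<in>tuples n p. q0 p j t = Some v)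
       \<and> (\<forall>v\<in>I1. \<exists>t\<in>tuples n p. q1 p j t = Some v)"
proof -
  have p: "0 < p" "2 < p"
    using assms(3) by auto
  have bounds: "1 \<le> int j" "int j + 3 \<le> int n" "int n - 2 \<le> int p"
    using assms(1,3-5) by auto
  have "{v. \<exists>t\<in>tuples n p. q0 p j t = Some v} = I0"
  proof (cases "(j, p) = (1, n - 2)")
    case True
    then have I0: "I0 = {1 .. int n - 2}" "int j = 1" "int p = int n - 2"
      using assms(1) by (auto simp: I0_def)
    then show ?thesis
      unfolding q0_values[OF p(1)] I0 using bounds
      by (intro multiples_between_eq_interval) (auto simp: algebra_simps)
  next
    case False
    then have I0: "I0 = {1 .. int n - 1}" "int n \<le> int p + int j"
      using bounds by (auto simp: I0_def)
    then show ?thesis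
      unfolding q0_values[OF p(1)] I0 using bounds
      by (intro multiples_between_eq_interval) (auto simp: algebra_simps)
  qed
  moreover have "{v. \<exists>t\<in>tuples n p. q1 p j t = Some v} = I1"
  proof (cases "(j, p) = (n - 3, n - 2)")
    case True
    then have I1: "I1 = {1 .. int n - 2}" "int j = int n - 3" "int p = int n - 2"
      using assms(1) by (auto simp: I1_def)
    then show ?thesis
      unfolding q1_values[OF p(1)] I1 using bounds
      by (intro multiples_between_eq_interval) (auto simp: algebra_simps)
  next
    case False
    then have I1: "I1 = {0 .. int n - 2}" "int j + 2 \<le> int p"
      using bounds by (auto simp: I1_def)
    then show ?thesis
      unfolding q1_values[OF p(1)] I1 using bounds
      by (intro multiples_between_eq_interval) (auto simp: algebra_simps)
  qed
  ultimately show ?thesis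
    using q0_q1_not_both_defined[OF p(2)] unfolding set_eq_iff mem_Collect_eq by (meson option.distinct(1))
qed

end
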